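(* A coproduct in a $*$-category is orthogonal if and only if it can be extended to an orthogonal biproduct; that is, a coproduct $(X,s_1,\dots,s_n)$ of $X_1,\dots,X_n$ is orthogonal if and only if there exist morphisms $r_k\colon X\to X_k$ ($k=1,\dots,n$) such that $(X,s_1,r_1,\dots,s_n,r_n)$ is an orthogonal biproduct.
   Context: A $*$-category is a category with a choice of $f^*\colon Y\to X$ for each $f\colon X\to Y$ such that $1^*=1$, $(gf)^*=f^*g^*$, $(f^* )^*=f$; an endomorphism $e$ is Hermitian if $e^*=e$. A coproduct $(X,s_1,\dots,s_n)$ is orthogonal if $s_k^*s_j=0$ for all $j\neq k$. A biproduct $(X,s_1,r_1,\dots,s_n,r_n)$ (in a category with a zero object: $(X,s_1,\dots,s_n)$ a coproduct, $(X,r_1,\dots,r_n)$ a product, $r_ks_k=1$, $r_ks_j=0$ for $j\neq k$) is orthogonal if each idempotent $s_kr_k$ is Hermitian. *)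

theory Defs
  imports Main
begin

text \<open>A (small) category given by objects, arrows, domain, codomain, identities and
  composition; Comp g f is "g after f".\<close>

record ('o, 'm) cat =
  Obj :: "'o set"
  Arr :: "'m set"
  Dom :: "'m \<Rightarrow> 'o"
  Cod :: "'m \<Rightarrow> 'o"
  Id :: "'o \<Rightarrow> 'm"
  Comp :: "'m \<Rightarrow> 'm \<Rightarrow> 'm"

definition hom :: "('o, 'm) cat \<Rightarrow> 'o \<Rightarrow> 'o \<Rightarrow> 'm set" where
  "hom C X Y = {f \<in> Arr C. Dom C f = X \<and> Cod C f = Y}"

definition category :: "('o, 'm) cat \<Rightarrow> bool" where
  "category C \<longleftrightarrow>
     (\<forall>f \<in> Arr C. Dom C f \<in> Obj C \<and> Cod C f \<in> Obj C) \<and>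
     (\<forall>X \<in> Obj C. Id C X \<in> hom C X X) \<and>
     (\<forall>f \<in> Arr C. \<forall>g \<in> Arr C. Cod C f = Dom C g \<longrightarrow>
        Comp C g f \<in> hom C (Dom C f) (Cod C g)) \<and>
     (\<forall>f \<in> Arr C. Comp C f (Id C (Dom C f)) = f \<and> Comp C (Id C (Cod C f)) f = f) \<and>
     (\<forall>f \<in> Arr C. \<forall>g \<in> Arr C. \<forall>h \<in> Arr C.
        Cod C f = Dom C g \<and> Cod C g = Dom C h \<longrightarrow>
        Comp C h (Comp C g f) = Comp C (Comp C h g) f)"

definition star_category :: "('o, 'm) cat \<Rightarrow> ('m \<Rightarrow> 'm) \<Rightarrow> bool" where
  "star_category C st \<longleftrightarrow> category C \<and>
     (\<forall>f \<in> Arr C. st f \<in> hom C (Cod C f) (Dom C f)) \<and>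
     (\<forall>X \<in> Obj C. st (Id C X) = Id C X) \<and>
     (\<forall>f \<in> Arr C. \<forall>g \<in> Arr C. Cod C f = Dom C g \<longrightarrow>
        st (Comp C g f) = Comp C (st f) (st g)) \<and>
     (\<forall>f \<in> Arr C. st (st f) = f)"

definition zero_object :: "('o, 'm) cat \<Rightarrow> 'o \<Rightarrow> bool" where
  "zero_object C Z \<longleftrightarrow> Z \<in> Obj C \<and>
     (\<forall>Y \<in> Obj C. (\<exists>!f. f \<in> hom C Z Y) \<and> (\<exists>!f. f \<in> hom C Y Z))"

definition has_zero_object :: "('o, 'm) cat \<Rightarrow> bool" where
  "has_zero_object C \<longleftrightarrow> (\<exists>Z. zero_object C Z)"

definition zero_mor :: "('o, 'm) cat \<Rightarrow> 'm \<Rightarrow> bool" where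
  "zero_mor C f \<longleftrightarrow> f \<in> Arr C \<and>
     (\<exists>Z g h. zero_object C Z \<and> g \<in> hom C (Dom C f) Z \<and> h \<in> hom C Z (Cod C f) \<and>
        f = Comp C h g)"

definition is_coproduct ::
  "('o, 'm) cat \<Rightarrow> nat \<Rightarrow> (nat \<Rightarrow> 'o) \<Rightarrow> 'o \<Rightarrow> (nat \<Rightarrow> 'm) \<Rightarrow> bool" where
  "is_coproduct C n Xs X s \<longleftrightarrow> X \<in> Obj C \<and> (\<forall>k \<in> {1..n}. Xs k \<in> Obj C) \<and>
     (\<forall>k \<in> {1..n}. s k \<in> hom C (Xs k) X) \<and>
     (\<forall>Y \<in> Obj C. \<forall>f. (\<forall>k \<in> {1..n}. f k \<in> hom C (Xs k) Y) \<longrightarrow>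
        (\<exists>!u. u \<in> hom C X Y \<and> (\<forall>k \<in> {1..n}. Comp C u (s k) = f k)))"

definition is_product ::
  "('o, 'm) cat \<Rightarrow> nat \<Rightarrow> (nat \<Rightarrow> 'o) \<Rightarrow> 'o \<Rightarrow> (nat \<Rightarrow> 'm) \<Rightarrow> bool" where
  "is_product C n Xs X r \<longleftrightarrow> X \<in> Obj C \<and> (\<forall>k \<in> {1..n}. Xs k \<in> Obj C) \<and>
     (\<forall>k \<in> {1..n}. r k \<in> hom C X (Xs k)) \<and>
     (\<forall>Y \<in> Obj C. \<forall>f. (\<forall>k \<in> {1..n}. f k \<in> hom C Y (Xs k)) \<longrightarrow>
        (\<exists>!u. u \<in> hom C Y X \<and> (\<forall>k \<in> {1..n}. Comp C (r k) u = f k)))"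

definition orthogonal_coproduct ::
  "('o, 'm) cat \<Rightarrow> ('m \<Rightarrow> 'm) \<Rightarrow> nat \<Rightarrow> (nat \<Rightarrow> 'o) \<Rightarrow> 'o \<Rightarrow> (nat \<Rightarrow> 'm) \<Rightarrow> bool" where
  "orthogonal_coproduct C st n Xs X s \<longleftrightarrow> is_coproduct C n Xs X s \<and>
     (\<forall>j \<in> {1..n}. \<forall>k \<in> {1..n}. j \<noteq> k \<longrightarrow> zero_mor C (Comp C (st (s k)) (s j)))"

definition is_biproduct ::
  "('o, 'm) cat \<Rightarrow> nat \<Rightarrow> (nat \<Rightarrow> 'o) \<Rightarrow> 'o \<Rightarrow> (nat \<Rightarrow> 'm) \<Rightarrow> (nat \<Rightarrow> 'm) \<Rightarrow> bool" where
  "is_biproduct C n Xs X s r \<longleftrightarrow> is_coproduct C n Xs X s \<and> is_product C n Xs X r \<and>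
     (\<forall>k \<in> {1..n}. Comp C (r k) (s k) = Id C (Xs k)) \<and>
     (\<forall>j \<in> {1..n}. \<forall>k \<in> {1..n}. j \<noteq> k \<longrightarrow> zero_mor C (Comp C (r k) (s j)))"

definition orthogonal_biproduct ::
  "('o, 'm) cat \<Rightarrow> ('m \<Rightarrow> 'm) \<Rightarrow> nat \<Rightarrow> (nat \<Rightarrow> 'o) \<Rightarrow> 'o \<Rightarrow> (nat \<Rightarrow> 'm) \<Rightarrow> (nat \<Rightarrow> 'm) \<Rightarrow> bool" where
  "orthogonal_biproduct C st n Xs X s r \<longleftrightarrow> is_biproduct C n Xs X s r \<and>
     (\<forall>k \<in> {1..n}. st (Comp C (s k) (r k)) = Comp C (s k) (r k))"

end

theory Submission
  imports Defs
begin

(* Both directions turn on the identity  s_k* = s_k* s_k r_k.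
   For an orthogonal biproduct it follows by taking adjoints in s_k r_k s_k = s_k, since s_k r_k
   is Hermitian; then s_k* s_j = s_k* s_k (r_k s_j) is zero for j ~= k.
   For an orthogonal coproduct take r_k with r_k s_j = delta_kj from the universal property; both
   sides of the identity then agree on every s_j.  The identity makes the Hermitian endomorphism
   s_k* s_k invertible with inverse r_k r_k*, so r_k = r_k r_k* s_k*.  Hence s_k r_k is Hermitian,
   and (X, r) is a product: the adjoints s_k* of a coproduct form a product, and twisting the
   projections by automorphisms of the factors preserves this. *)

locale star_cat =
  fixes C :: "('o, 'm) cat" and st :: "'m \<Rightarrow> 'm"
  assumes star_category: "star_category C st"
begin

abbreviation arr_comp (infixr "\<cdot>" 70) where "g \<cdot> f \<equiv> Comp C g f"

lemma category: "category C"
  using star_category unfolding star_category_def by blast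

lemma objs_of_hom: "f \<in> hom C A B \<Longrightarrow> A \<in> Obj C \<and> B \<in> Obj C"
  using category unfolding category_def hom_def by auto

lemma comp_in_hom: "f \<in> hom C A B \<Longrightarrow> g \<in> hom C B D \<Longrightarrow> g \<cdot> f \<in> hom C A D"
  using category unfolding category_def hom_def by auto

lemma comp_assoc:
  "f \<in> hom C A B \<Longrightarrow> g \<in> hom C B D \<Longrightarrow> h \<in> hom C D E \<Longrightarrow> h \<cdot> (g \<cdot> f) = (h \<cdot> g) \<cdot> f"
  using category unfolding category_def hom_def by auto

lemma comp_id_left: "f \<in> hom C A B \<Longrightarrow> Id C B \<cdot> f = f"
  using category unfolding category_def hom_def by auto

lemma comp_id_right: "f \<in> hom C A B \<Longrightarrow> f \<cdot> Id C A = f"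
  using category unfolding category_def hom_def by auto

lemma id_in_hom: "A \<in> Obj C \<Longrightarrow> Id C A \<in> hom C A A"
  using category unfolding category_def hom_def by auto

lemma star_in_hom: "f \<in> hom C A B \<Longrightarrow> st f \<in> hom C B A"
  using star_category unfolding star_category_def hom_def by auto

lemma star_comp: "f \<in> hom C A B \<Longrightarrow> g \<in> hom C B D \<Longrightarrow> st (g \<cdot> f) = st f \<cdot> st g"
  using star_category unfolding star_category_def hom_def by auto

lemma star_star: "f \<in> hom C A B \<Longrightarrow> st (st f) = f"
  using star_category unfolding star_category_def hom_def by auto

lemma star_id: "A \<in> Obj C \<Longrightarrow> st (Id C A) = Id C A"
  using star_category unfolding star_category_def by auto

lemma star_inject: "f \<in> hom C A B \<Longrightarrow> g \<in> hom C A' B' \<Longrightarrow> st f = st g \<longleftrightarrow> f = g"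
  using star_star by metis

lemma star_gram_hermitian: "f \<in> hom C A B \<Longrightarrow> st (st f \<cdot> f) = st f \<cdot> f"
  using star_comp star_star star_in_hom by metis

lemma star_conjugate_hermitian:
  assumes "s \<in> hom C A X" "b \<in> hom C A A" "st b = b"
  shows "st (s \<cdot> b \<cdot> st s) = s \<cdot> b \<cdot> st s"
proof -
  have adj_s: "st s \<in> hom C X A" using star_in_hom[OF assms(1)] .
  have "st (s \<cdot> b \<cdot> st s) = st (b \<cdot> st s) \<cdot> st s"
    using star_comp[OF comp_in_hom[OF adj_s assms(2)] assms(1)] by (simp add: star_star[OF assms(1)])
  also have "\<dots> = (s \<cdot> b) \<cdot> st s"
    using star_comp[OF adj_s assms(2)] by (simp add: star_star[OF assms(1)] assms(3))
  finally show ?thesis using comp_assoc[OF adj_s assms(2,1)] by simp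
qed

lemma hermitian_inverse_commute:
  assumes "a \<in> hom C A A" "b \<in> hom C A A" "st a = a" "st b = b" "a \<cdot> b = Id C A"
  shows "b \<cdot> a = Id C A"
proof -
  have "b \<cdot> a = st (a \<cdot> b)" using assms star_comp by metis
  then show ?thesis using assms objs_of_hom star_id by metis
qed

lemma iso_comp_left_iff:
  assumes "c \<in> hom C A A'" "d \<in> hom C A' A" "d \<cdot> c = Id C A" "c \<cdot> d = Id C A'"
    and "x \<in> hom C Y A" "y \<in> hom C Y A'"
  shows "c \<cdot> x = y \<longleftrightarrow> x = d \<cdot> y"
proof
  assume "c \<cdot> x = y"
  then show "x = d \<cdot> y" using assms comp_assoc[of x Y A c A' d] comp_id_left by auto
next
  assume "x = d \<cdot> y"
  then show "c \<cdot> x = y" using assms comp_assoc[of y Y A' d A c] comp_id_left by auto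
qed

subsection \<open>Zero morphisms\<close>

lemma zero_object_hom_from_unique:
  assumes "zero_object C Z" "f \<in> hom C Z Y" "f' \<in> hom C Z Y"
  shows "f = f'"
proof -
  have "Y \<in> Obj C" using objs_of_hom[OF assms(2)] by blast
  then have "\<exists>!f. f \<in> hom C Z Y" using assms(1) unfolding zero_object_def by blast
  then show ?thesis using assms(2,3) by blast
qed

lemma zero_object_hom_to_unique:
  assumes "zero_object C Z" "g \<in> hom C Y Z" "g' \<in> hom C Y Z"
  shows "g = g'"
proof -
  have "Y \<in> Obj C" using objs_of_hom[OF assms(2)] by blast
  then have "\<exists>!g. g \<in> hom C Y Z" using assms(1) unfolding zero_object_def by blast
  then show ?thesis using assms(2,3) by blast
qed

lemma zero_morI:
  assumes "zero_object C Z" "g \<in> hom C A Z" "h \<in> hom C Z B"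
  shows "zero_mor C (h \<cdot> g)"
proof -
  have "h \<cdot> g \<in> hom C A B" using comp_in_hom[OF assms(2,3)] .
  then have "h \<cdot> g \<in> Arr C" "Dom C (h \<cdot> g) = A" "Cod C (h \<cdot> g) = B"
    unfolding hom_def by auto
  then show ?thesis unfolding zero_mor_def using assms by blast
qed

lemma zero_morE:
  assumes "zero_mor C f" "f \<in> hom C A B"
  obtains Z g h where "zero_object C Z" "g \<in> hom C A Z" "h \<in> hom C Z B" "f = h \<cdot> g"
proof -
  obtain Z g h where "zero_object C Z" "g \<in> hom C (Dom C f) Z" "h \<in> hom C Z (Cod C f)"
    "f = h \<cdot> g"
    using assms(1) unfolding zero_mor_def by blast
  moreover have "Dom C f = A" "Cod C f = B" using assms(2) unfolding hom_def by auto
  ultimately show ?thesis using that by simp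
qed

lemma zero_mor_comp:
  assumes "zero_mor C f" "f \<in> hom C A B" "g \<in> hom C B D"
  shows "zero_mor C (g \<cdot> f)"
proof -
  obtain Z h k where Z: "zero_object C Z" "h \<in> hom C A Z" "k \<in> hom C Z B" "f = k \<cdot> h"
    using assms zero_morE by blast
  then have "g \<cdot> f = (g \<cdot> k) \<cdot> h" using comp_assoc[OF Z(2,3) assms(3)] by simp
  then show ?thesis using zero_morI[OF Z(1,2) comp_in_hom[OF Z(3) assms(3)]] by simp
qed

lemma zero_mor_exists:
  assumes "has_zero_object C" "A \<in> Obj C" "B \<in> Obj C"
  obtains f where "f \<in> hom C A B" "zero_mor C f"
proof -
  obtain Z where Z: "zero_object C Z" using assms unfolding has_zero_object_def by blast
  obtain g where g: "g \<in> hom C A Z" using Z assms(2) unfolding zero_object_def by blast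
  obtain h where h: "h \<in> hom C Z B" using Z assms(3) unfolding zero_object_def by blast
  show ?thesis using that[OF comp_in_hom[OF g h] zero_morI[OF Z g h]] .
qed

lemma zero_mor_unique:
  assumes "zero_mor C f" "zero_mor C f'" "f \<in> hom C A B" "f' \<in> hom C A B"
  shows "f = f'"
proof -
  obtain Z g h where Z: "zero_object C Z" "g \<in> hom C A Z" "h \<in> hom C Z B" "f = h \<cdot> g"
    using assms zero_morE by blast
  obtain Z' g' h' where Z': "zero_object C Z'" "g' \<in> hom C A Z'" "h' \<in> hom C Z' B" "f' = h' \<cdot> g'"
    using assms zero_morE by blast
  have "Z' \<in> Obj C" using objs_of_hom[OF Z'(2)] by blast
  then obtain i where i: "i \<in> hom C Z Z'" using Z(1) unfolding zero_object_def by blast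
  have "i \<cdot> g = g'" using zero_object_hom_to_unique[OF Z'(1) comp_in_hom[OF Z(2) i] Z'(2)] .
  moreover have "h' \<cdot> i = h" using zero_object_hom_from_unique[OF Z(1) comp_in_hom[OF i Z'(3)] Z(3)] .
  ultimately show ?thesis using Z(4) Z'(4) comp_assoc[OF Z(2) i Z'(3)] by simp
qed

subsection \<open>Coproducts and products\<close>

lemma coproduct_in_hom: "is_coproduct C n Xs X s \<Longrightarrow> k \<in> {1..n} \<Longrightarrow> s k \<in> hom C (Xs k) X"
  unfolding is_coproduct_def by blast

lemma coproduct_universal:
  assumes "is_coproduct C n Xs X s" "Y \<in> Obj C" "\<And>k. k \<in> {1..n} \<Longrightarrow> f k \<in> hom C (Xs k) Y"
  shows "\<exists>!u. u \<in> hom C X Y \<and> (\<forall>k \<in> {1..n}. u \<cdot> s k = f k)"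
  using assms unfolding is_coproduct_def by blast

lemma coproduct_eqI:
  assumes cop: "is_coproduct C n Xs X s" and u: "u \<in> hom C X Y" and "u' \<in> hom C X Y"
    and "\<And>k. k \<in> {1..n} \<Longrightarrow> u \<cdot> s k = u' \<cdot> s k"
  shows "u = u'"
proof -
  have "\<exists>!w. w \<in> hom C X Y \<and> (\<forall>k \<in> {1..n}. w \<cdot> s k = u \<cdot> s k)"
    using objs_of_hom[OF u]
    by (intro coproduct_universal[OF cop]) (auto intro: comp_in_hom[OF coproduct_in_hom[OF cop] u])
  moreover have "\<forall>k \<in> {1..n}. u' \<cdot> s k = u \<cdot> s k" using assms(4) by simp
  ultimately show ?thesis using u assms(3) by blast
qed

lemma coproduct_star_product:
  assumes cop: "is_coproduct C n Xs X s"
  shows "is_product C n Xs X (\<lambda>k. st (s k))"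
  unfolding is_product_def
proof (intro conjI ballI allI impI)
  show "X \<in> Obj C" "\<And>k. k \<in> {1..n} \<Longrightarrow> Xs k \<in> Obj C"
    using cop unfolding is_coproduct_def by auto
  show "\<And>k. k \<in> {1..n} \<Longrightarrow> st (s k) \<in> hom C X (Xs k)"
    using coproduct_in_hom[OF cop] star_in_hom by blast
  fix Y f assume Y: "Y \<in> Obj C" and f: "\<forall>k \<in> {1..n}. f k \<in> hom C Y (Xs k)"
  have f_adj: "\<And>k. k \<in> {1..n} \<Longrightarrow> st (f k) \<in> hom C (Xs k) Y" using f star_in_hom by blast
  obtain v where v: "v \<in> hom C X Y" "\<forall>k \<in> {1..n}. v \<cdot> s k = st (f k)"
    using coproduct_universal[OF cop Y f_adj] by blast
  have adjoint: "st (s k) \<cdot> u = f k \<longleftrightarrow> st u \<cdot> s k = st (f k)"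
    if u: "u \<in> hom C Y X" and k: "k \<in> {1..n}" for u k
  proof -
    have sk: "s k \<in> hom C (Xs k) X" using coproduct_in_hom[OF cop k] .
    have "st (st (s k) \<cdot> u) = st u \<cdot> s k"
      using star_comp[OF u star_in_hom[OF sk]] star_star[OF sk] by simp
    then show ?thesis
      using star_inject[OF comp_in_hom[OF u star_in_hom[OF sk]]] f k by metis
  qed
  show "\<exists>!u. u \<in> hom C Y X \<and> (\<forall>k \<in> {1..n}. st (s k) \<cdot> u = f k)"
  proof
    show "st v \<in> hom C Y X \<and> (\<forall>k \<in> {1..n}. st (s k) \<cdot> st v = f k)"
      using star_in_hom[OF v(1)] v(2) by (simp add: adjoint star_star[OF v(1)])
  next
    fix u assume u: "u \<in> hom C Y X \<and> (\<forall>k \<in> {1..n}. st (s k) \<cdot> u = f k)"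
    have "st u = v"
    proof (rule coproduct_eqI[OF cop star_in_hom v(1)])
      show "u \<in> hom C Y X" using u by blast
      show "st u \<cdot> s k = v \<cdot> s k" if k: "k \<in> {1..n}" for k
      proof -
        have "st (s k) \<cdot> u = f k" "v \<cdot> s k = st (f k)" using u v(2) k by blast+
        then show ?thesis using adjoint[OF conjunct1[OF u] k] by simp
      qed
    qed
    then show "u = st v" using star_star[OF conjunct1[OF u]] by simp
  qed
qed

lemma product_universal:
  assumes "is_product C n Xs X p" "Y \<in> Obj C" "\<And>k. k \<in> {1..n} \<Longrightarrow> f k \<in> hom C Y (Xs k)"
  shows "\<exists>!u. u \<in> hom C Y X \<and> (\<forall>k \<in> {1..n}. p k \<cdot> u = f k)"
  using assms unfolding is_product_def by blast

lemma product_comp_iso: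
  assumes prod: "is_product C n Xs X p"
    and c: "\<And>k. k \<in> {1..n} \<Longrightarrow> c k \<in> hom C (Xs k) (Xs k)"
    and d: "\<And>k. k \<in> {1..n} \<Longrightarrow> d k \<in> hom C (Xs k) (Xs k)"
    and cd: "\<And>k. k \<in> {1..n} \<Longrightarrow> c k \<cdot> d k = Id C (Xs k)"
    and dc: "\<And>k. k \<in> {1..n} \<Longrightarrow> d k \<cdot> c k = Id C (Xs k)"
    and q: "\<And>k. k \<in> {1..n} \<Longrightarrow> q k = c k \<cdot> p k"
  shows "is_product C n Xs X q"
  unfolding is_product_def
proof (intro conjI ballI allI impI)
  have p: "\<And>k. k \<in> {1..n} \<Longrightarrow> p k \<in> hom C X (Xs k)"
    using prod unfolding is_product_def by blast
  show "X \<in> Obj C" "\<And>k. k \<in> {1..n} \<Longrightarrow> Xs k \<in> Obj C"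
    using prod unfolding is_product_def by auto
  show "q k \<in> hom C X (Xs k)" if k: "k \<in> {1..n}" for k
    using comp_in_hom[OF p[OF k] c[OF k]] q[OF k] by simp
  fix Y f assume Y: "Y \<in> Obj C" and f: "\<forall>k \<in> {1..n}. f k \<in> hom C Y (Xs k)"
  have df: "d k \<cdot> f k \<in> hom C Y (Xs k)" if k: "k \<in> {1..n}" for k
    using comp_in_hom[OF bspec[OF f k] d[OF k]] .
  have q_iff: "q k \<cdot> u = f k \<longleftrightarrow> p k \<cdot> u = d k \<cdot> f k"
    if u: "u \<in> hom C Y X" and k: "k \<in> {1..n}" for u k
  proof -
    have "q k \<cdot> u = c k \<cdot> (p k \<cdot> u)" using q[OF k] comp_assoc[OF u p[OF k] c[OF k]] by simp
    then show ?thesis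
      using iso_comp_left_iff[OF c[OF k] d[OF k] dc[OF k] cd[OF k] comp_in_hom[OF u p[OF k]]] f k
      by simp
  qed
  obtain u where u: "u \<in> hom C Y X" "\<forall>k \<in> {1..n}. p k \<cdot> u = d k \<cdot> f k"
    and unique: "\<And>u'. u' \<in> hom C Y X \<Longrightarrow> \<forall>k \<in> {1..n}. p k \<cdot> u' = d k \<cdot> f k \<Longrightarrow> u' = u"
    using product_universal[OF prod Y df] by blast
  show "\<exists>!u. u \<in> hom C Y X \<and> (\<forall>k \<in> {1..n}. q k \<cdot> u = f k)"
  proof (rule ex1I)
    show "u \<in> hom C Y X \<and> (\<forall>k \<in> {1..n}. q k \<cdot> u = f k)" using u q_iff by blast
    show "u' = u" if "u' \<in> hom C Y X \<and> (\<forall>k \<in> {1..n}. q k \<cdot> u' = f k)" for u'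
      using that q_iff unique by blast
  qed
qed

subsection \<open>Adjoints of split monomorphisms\<close>

lemma hermitian_idempotent_star_factor:
  assumes s: "s \<in> hom C A X" and r: "r \<in> hom C X A"
    and rs: "r \<cdot> s = Id C A" and herm: "st (s \<cdot> r) = s \<cdot> r"
  shows "st s = (st s \<cdot> s) \<cdot> r"
proof -
  have sr: "s \<cdot> r \<in> hom C X X" using comp_in_hom[OF r s] .
  have "(s \<cdot> r) \<cdot> s = s" using comp_assoc[OF s r s] rs comp_id_right[OF s] by simp
  then have "st s = st ((s \<cdot> r) \<cdot> s)" by simp
  also have "\<dots> = st s \<cdot> (s \<cdot> r)" using star_comp[OF s sr] herm by simp
  also have "\<dots> = (st s \<cdot> s) \<cdot> r" using comp_assoc[OF r s star_in_hom[OF s]] .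
  finally show ?thesis .
qed

lemma orthogonal_coproduct_star_factor:
  assumes orth: "orthogonal_coproduct C st n Xs X s" and k: "k \<in> {1..n}"
    and r: "r \<in> hom C X (Xs k)" and rs: "r \<cdot> s k = Id C (Xs k)"
    and r_zero: "\<And>j. j \<in> {1..n} \<Longrightarrow> j \<noteq> k \<Longrightarrow> zero_mor C (r \<cdot> s j)"
  shows "st (s k) = (st (s k) \<cdot> s k) \<cdot> r"
proof -
  have cop: "is_coproduct C n Xs X s" using orth unfolding orthogonal_coproduct_def by blast
  have sk: "s k \<in> hom C (Xs k) X" using coproduct_in_hom[OF cop k] .
  have gram: "st (s k) \<cdot> s k \<in> hom C (Xs k) (Xs k)" using comp_in_hom[OF sk star_in_hom[OF sk]] .
  show ?thesis
  proof (rule coproduct_eqI[OF cop star_in_hom[OF sk] comp_in_hom[OF r gram]])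
    fix j assume j: "j \<in> {1..n}"
    have sj: "s j \<in> hom C (Xs j) X" using coproduct_in_hom[OF cop j] .
    have assoc_j: "((st (s k) \<cdot> s k) \<cdot> r) \<cdot> s j = (st (s k) \<cdot> s k) \<cdot> (r \<cdot> s j)"
      using comp_assoc[OF sj r gram] by simp
    show "st (s k) \<cdot> s j = ((st (s k) \<cdot> s k) \<cdot> r) \<cdot> s j"
    proof (cases "j = k")
      case True
      then show ?thesis using assoc_j rs comp_id_right[OF gram] by simp
    next
      case False
      have "zero_mor C (st (s k) \<cdot> s j)"
        using orth j k False unfolding orthogonal_coproduct_def by blast
      moreover have "zero_mor C ((st (s k) \<cdot> s k) \<cdot> (r \<cdot> s j))"
        using zero_mor_comp[OF r_zero[OF j False] comp_in_hom[OF sj r] gram] .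
      ultimately show ?thesis
        using zero_mor_unique comp_in_hom[OF sj star_in_hom[OF sk]]
          comp_in_hom[OF comp_in_hom[OF sj r] gram] assoc_j by metis
    qed
  qed
qed

lemma star_factor_gram_inverse:
  assumes s: "s \<in> hom C A X" and r: "r \<in> hom C X A"
    and rs: "r \<cdot> s = Id C A" and factor: "st s = (st s \<cdot> s) \<cdot> r"
  shows "(st s \<cdot> s) \<cdot> (r \<cdot> st r) = Id C A" and "(r \<cdot> st r) \<cdot> (st s \<cdot> s) = Id C A"
proof -
  have gram_s: "st s \<cdot> s \<in> hom C A A" using comp_in_hom[OF s star_in_hom[OF s]] .
  have gram_r: "r \<cdot> st r \<in> hom C A A" using comp_in_hom[OF star_in_hom[OF r] r] .
  have "(st s \<cdot> s) \<cdot> (r \<cdot> st r) = ((st s \<cdot> s) \<cdot> r) \<cdot> st r"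
    using comp_assoc[OF star_in_hom[OF r] r gram_s] .
  also have "\<dots> = st (r \<cdot> s)" using factor star_comp[OF s r] by simp
  also have "\<dots> = Id C A" using rs star_id objs_of_hom[OF s] by simp
  finally show inv: "(st s \<cdot> s) \<cdot> (r \<cdot> st r) = Id C A" .
  have "st (r \<cdot> st r) = r \<cdot> st r"
    using star_gram_hermitian[OF star_in_hom[OF r]] star_star[OF r] by simp
  then show "(r \<cdot> st r) \<cdot> (st s \<cdot> s) = Id C A"
    using hermitian_inverse_commute[OF gram_s gram_r star_gram_hermitian[OF s] _ inv] by blast
qed

lemma star_factor_retraction_eq:
  assumes s: "s \<in> hom C A X" and r: "r \<in> hom C X A"
    and rs: "r \<cdot> s = Id C A" and factor: "st s = (st s \<cdot> s) \<cdot> r"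
  shows "r = (r \<cdot> st r) \<cdot> st s"
proof -
  have gram_s: "st s \<cdot> s \<in> hom C A A" using comp_in_hom[OF s star_in_hom[OF s]] .
  have gram_r: "r \<cdot> st r \<in> hom C A A" using comp_in_hom[OF star_in_hom[OF r] r] .
  have "(r \<cdot> st r) \<cdot> st s = (r \<cdot> st r) \<cdot> ((st s \<cdot> s) \<cdot> r)" using factor by simp
  also have "\<dots> = ((r \<cdot> st r) \<cdot> (st s \<cdot> s)) \<cdot> r" using comp_assoc[OF r gram_s gram_r] .
  also have "\<dots> = r"
    using star_factor_gram_inverse(2)[OF s r rs factor] comp_id_left[OF r] by simp
  finally show ?thesis by simp
qed

subsection \<open>Orthogonal coproducts and biproducts\<close>

lemma orthogonal_biproduct_imp_orthogonal_coproduct: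
  assumes "orthogonal_biproduct C st n Xs X s r"
  shows "orthogonal_coproduct C st n Xs X s"
proof -
  have cop: "is_coproduct C n Xs X s" and prod: "is_product C n Xs X r"
    and rs: "\<And>k. k \<in> {1..n} \<Longrightarrow> r k \<cdot> s k = Id C (Xs k)"
    and r_zero: "\<And>j k. j \<in> {1..n} \<Longrightarrow> k \<in> {1..n} \<Longrightarrow> j \<noteq> k \<Longrightarrow> zero_mor C (r k \<cdot> s j)"
    and herm: "\<And>k. k \<in> {1..n} \<Longrightarrow> st (s k \<cdot> r k) = s k \<cdot> r k"
    using assms unfolding orthogonal_biproduct_def is_biproduct_def by auto
  have "zero_mor C (st (s k) \<cdot> s j)" if j: "j \<in> {1..n}" and k: "k \<in> {1..n}" and "j \<noteq> k" for j k
  proof -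
    have sj: "s j \<in> hom C (Xs j) X" and sk: "s k \<in> hom C (Xs k) X"
      using coproduct_in_hom[OF cop] j k by blast+
    have rk: "r k \<in> hom C X (Xs k)" using prod k unfolding is_product_def by blast
    have gram: "st (s k) \<cdot> s k \<in> hom C (Xs k) (Xs k)" using comp_in_hom[OF sk star_in_hom[OF sk]] .
    have "st (s k) \<cdot> s j = ((st (s k) \<cdot> s k) \<cdot> r k) \<cdot> s j"
      using hermitian_idempotent_star_factor[OF sk rk rs[OF k] herm[OF k]] by simp
    also have "\<dots> = (st (s k) \<cdot> s k) \<cdot> (r k \<cdot> s j)" using comp_assoc[OF sj rk gram] by simp
    finally show ?thesis
      using zero_mor_comp[OF r_zero[OF j k \<open>j \<noteq> k\<close>] comp_in_hom[OF sj rk] gram] by simp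
  qed
  then show ?thesis unfolding orthogonal_coproduct_def using cop by blast
qed

lemma coproduct_retractions_exist:
  assumes has_zero: "has_zero_object C" and cop: "is_coproduct C n Xs X s"
  obtains r where "\<And>k. k \<in> {1..n} \<Longrightarrow> r k \<in> hom C X (Xs k)"
    and "\<And>k. k \<in> {1..n} \<Longrightarrow> r k \<cdot> s k = Id C (Xs k)"
    and "\<And>j k. j \<in> {1..n} \<Longrightarrow> k \<in> {1..n} \<Longrightarrow> j \<noteq> k \<Longrightarrow> zero_mor C (r k \<cdot> s j)"
proof -
  have Xs: "\<And>k. k \<in> {1..n} \<Longrightarrow> Xs k \<in> Obj C" using cop unfolding is_coproduct_def by blast
  define zero_arr where "zero_arr A B = (SOME f. f \<in> hom C A B \<and> zero_mor C f)" for A B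
  have zero_arr: "zero_arr A B \<in> hom C A B \<and> zero_mor C (zero_arr A B)" if "A \<in> Obj C" "B \<in> Obj C" for A B
    unfolding zero_arr_def by (rule someI_ex) (meson zero_mor_exists[OF has_zero that])
  define delta where "delta k j = (if j = k then Id C (Xs k) else zero_arr (Xs j) (Xs k))" for k j
  have delta: "delta k j \<in> hom C (Xs j) (Xs k)" if "k \<in> {1..n}" "j \<in> {1..n}" for k j
    using zero_arr id_in_hom Xs that unfolding delta_def by auto
  define r where "r k = (SOME u. u \<in> hom C X (Xs k) \<and> (\<forall>j \<in> {1..n}. u \<cdot> s j = delta k j))" for k
  have r: "r k \<in> hom C X (Xs k) \<and> (\<forall>j \<in> {1..n}. r k \<cdot> s j = delta k j)" if k: "k \<in> {1..n}" for k
    unfolding r_def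
    by (rule someI_ex) (use coproduct_universal[OF cop Xs[OF k] delta[OF k]] in blast)
  show ?thesis
  proof (rule that)
    show "\<And>k. k \<in> {1..n} \<Longrightarrow> r k \<in> hom C X (Xs k)" using r by blast
    show "\<And>k. k \<in> {1..n} \<Longrightarrow> r k \<cdot> s k = Id C (Xs k)" using r unfolding delta_def by simp
    show "\<And>j k. j \<in> {1..n} \<Longrightarrow> k \<in> {1..n} \<Longrightarrow> j \<noteq> k \<Longrightarrow> zero_mor C (r k \<cdot> s j)"
      using r zero_arr Xs unfolding delta_def by simp
  qed
qed

lemma orthogonal_coproduct_extends_to_biproduct:
  assumes orth: "orthogonal_coproduct C st n Xs X s"
    and r: "\<And>k. k \<in> {1..n} \<Longrightarrow> r k \<in> hom C X (Xs k)"
    and rs: "\<And>k. k \<in> {1..n} \<Longrightarrow> r k \<cdot> s k = Id C (Xs k)"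
    and r_zero: "\<And>j k. j \<in> {1..n} \<Longrightarrow> k \<in> {1..n} \<Longrightarrow> j \<noteq> k \<Longrightarrow> zero_mor C (r k \<cdot> s j)"
  shows "orthogonal_biproduct C st n Xs X s r"
proof -
  have cop: "is_coproduct C n Xs X s" using orth unfolding orthogonal_coproduct_def by blast
  have s: "\<And>k. k \<in> {1..n} \<Longrightarrow> s k \<in> hom C (Xs k) X" using coproduct_in_hom[OF cop] .
  have factor: "st (s k) = (st (s k) \<cdot> s k) \<cdot> r k" if k: "k \<in> {1..n}" for k
    using orthogonal_coproduct_star_factor[OF orth k r[OF k] rs[OF k]] r_zero k by blast
  have gram_s: "st (s k) \<cdot> s k \<in> hom C (Xs k) (Xs k)"
    and gram_r: "r k \<cdot> st (r k) \<in> hom C (Xs k) (Xs k)" if k: "k \<in> {1..n}" for k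
    using comp_in_hom[OF s[OF k] star_in_hom[OF s[OF k]]] comp_in_hom[OF star_in_hom[OF r[OF k]] r[OF k]]
    by auto
  have r_eq: "r k = (r k \<cdot> st (r k)) \<cdot> st (s k)" if k: "k \<in> {1..n}" for k
    using star_factor_retraction_eq[OF s[OF k] r[OF k] rs[OF k] factor[OF k]] .
  have "is_product C n Xs X r"
    using product_comp_iso[OF coproduct_star_product[OF cop] gram_r gram_s] r_eq
      star_factor_gram_inverse[OF s r rs factor] by blast
  moreover have "st (s k \<cdot> r k) = s k \<cdot> r k" if k: "k \<in> {1..n}" for k
  proof -
    have "st (r k \<cdot> st (r k)) = r k \<cdot> st (r k)"
      using star_gram_hermitian[OF star_in_hom[OF r[OF k]]] star_star[OF r[OF k]] by simp
    moreover have "s k \<cdot> r k = s k \<cdot> (r k \<cdot> st (r k)) \<cdot> st (s k)"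
      using arg_cong[OF r_eq[OF k], of "\<lambda>x. s k \<cdot> x"] .
    ultimately show ?thesis using star_conjugate_hermitian[OF s[OF k] gram_r[OF k]] by simp
  qed
  ultimately show ?thesis
    unfolding orthogonal_biproduct_def is_biproduct_def using cop rs r_zero by blast
qed

end

theorem proposition4p2:
  fixes C :: "('o, 'm) cat" and st :: "'m \<Rightarrow> 'm"
    and n :: nat and Xs :: "nat \<Rightarrow> 'o" and X :: 'o and s :: "nat \<Rightarrow> 'm"
  assumes "star_category C st"
    and "has_zero_object C"
    and "is_coproduct C n Xs X s"
  shows "orthogonal_coproduct C st n Xs X s \<longleftrightarrow> (\<exists>r. orthogonal_biproduct C st n Xs X s r)"
proof -
  interpret star_cat C st using assms(1) by (rule star_cat.intro)
  show ?thesis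
  proof
    assume orth: "orthogonal_coproduct C st n Xs X s"
    obtain r where "\<And>k. k \<in> {1..n} \<Longrightarrow> r k \<in> hom C X (Xs k)"
      and "\<And>k. k \<in> {1..n} \<Longrightarrow> r k \<cdot> s k = Id C (Xs k)"
      and "\<And>j k. j \<in> {1..n} \<Longrightarrow> k \<in> {1..n} \<Longrightarrow> j \<noteq> k \<Longrightarrow> zero_mor C (r k \<cdot> s j)"
      using coproduct_retractions_exist[OF assms(2,3)] by blast
    then show "\<exists>r. orthogonal_biproduct C st n Xs X s r"
      using orthogonal_coproduct_extends_to_biproduct[OF orth] by blast
  next
    assume "\<exists>r. orthogonal_biproduct C st n Xs X s r"
    then show "orthogonal_coproduct C st n Xs X s"
      using orthogonal_biproduct_imp_orthogonal_coproduct by blast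
  qed
qed

end
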